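(* Let $\mu_1,\mu_2$ be real numbers with $-\tfrac12<\mu_1<\mu_2$ and let $\theta$ be the linear operator acting termwise on power series by $\theta(x^n)=\frac{\gamma_{\mu_1}(n)}{\gamma_{\mu_2}(n)}x^n$. Then for every $f(x)=\sum_{n\ge0}a_nx^n$ whose power series converges on $]-1,1[$ and every $x\in\,]-1,1[$, $$\theta(f)(x)=\frac{1}{\beta(\mu_1+\frac12,\mu_2-\mu_1)}\int_{-1}^1f(xt)\,|t|^{2\mu_1}(1-t)^{\mu_2-\mu_1-1}(1+t)^{\mu_2-\mu_1}\,dt .$$ In particular, $\exp_{\mu_2}(x)=\frac{1}{\beta(\mu_1+\frac12,\mu_2-\mu_1)}\int_{-1}^1\exp_{\mu_1}(xt)|t|^{2\mu_1}(1-t)^{\mu_2-\mu_1-1}(1+t)^{\mu_2-\mu_1}dt$.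
   Context: For $\mu\notin\{-\frac12,-\frac32,\dots\}$ and $n=2p+\epsilon$ with $p\in\mathbb{N}$, $\epsilon\in\{0,1\}$, set $\gamma_\mu(n)=2^{2p+\epsilon}\,p!\,(\mu+\frac12)_{p+\epsilon}$, where $(\alpha)_n=\Gamma(\alpha+n)/\Gamma(\alpha)$. The generalized exponential is $\exp_\mu(x)=\sum_{n\ge0}x^n/\gamma_\mu(n)$. $\beta(a,b)=\Gamma(a)\Gamma(b)/\Gamma(a+b)$ is Euler's Beta function. *)

theory Defs
  imports "HOL-Analysis.Analysis"
begin

definition gamma_mu :: "real \<Rightarrow> nat \<Rightarrow> real" where
  "gamma_mu \<mu> n = 2 ^ n * fact (n div 2) * pochhammer (\<mu> + 1/2) (n div 2 + n mod 2)"

definition exp_mu :: "real \<Rightarrow> real \<Rightarrow> real" where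
  "exp_mu \<mu> x = (\<Sum>n. x ^ n / gamma_mu \<mu> n)"

definition weight :: "real \<Rightarrow> real \<Rightarrow> real \<Rightarrow> real" where
  "weight \<mu>1 \<mu>2 t = \<bar>t\<bar> powr (2 * \<mu>1) * (1 - t) powr (\<mu>2 - \<mu>1 - 1) * (1 + t) powr (\<mu>2 - \<mu>1)"

end

theory Submission
  imports Defs
begin

text \<open>
  With \<open>q = \<lceil>n/2\<rceil>\<close>, the multiplier \<open>\<gamma>\<^sub>\<mu>\<^sub>1(n)/\<gamma>\<^sub>\<mu>\<^sub>2(n)\<close> is the Pochhammer ratio
  \<open>(\<mu>\<^sub>1+1/2)\<^sub>q / (\<mu>\<^sub>2+1/2)\<^sub>q = \<beta>(\<mu>\<^sub>1+1/2+q, \<mu>\<^sub>2-\<mu>\<^sub>1) / \<beta>(\<mu>\<^sub>1+1/2, \<mu>\<^sub>2-\<mu>\<^sub>1)\<close>.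
  The numerator is the \<open>n\<close>-th moment of the weight: for \<open>t \<in> [0,1]\<close> the weight at \<open>\<plusminus>t\<close> is
  \<open>t\<^bsup>2\<mu>\<^sub>1\<^esup> (1-t\<^sup>2)\<^bsup>\<mu>\<^sub>2-\<mu>\<^sub>1-1\<^esup> (1\<plusminus>t)\<close>, the substitution \<open>u = t\<^sup>2\<close> turns
  \<open>\<integral>\<^sub>0\<^sup>1 t\<^sup>s (1-t\<^sup>2)\<^bsup>d-1\<^esup>\<close> into \<open>\<beta>((s+1)/2, d)/2\<close>, and adding the two halves the factor
  \<open>1\<plusminus>t\<close> cancels the term of the wrong parity. So \<open>\<theta>\<close> agrees with the integral operator on
  monomials, and dominated convergence (on \<open>[-1,1]\<close> the partial sums are bounded by
  \<open>\<Sum>|a\<^sub>n||x|\<^sup>n\<close>) extends the identity to the power series.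
\<close>

lemma Beta_pos:
  fixes x y :: real
  shows "x > 0 \<Longrightarrow> y > 0 \<Longrightarrow> Beta x y > 0"
  by (simp add: Beta_def)

lemma Beta_plus_of_nat:
  fixes e d :: real
  assumes e: "e > 0" and d: "d > 0"
  shows "Beta (e + real q) d = Beta e d * (pochhammer e q / pochhammer (e + d) q)"
proof -
  have not_nonpos_Int: "z \<notin> \<int>\<^sub>\<le>\<^sub>0" if "z > 0" for z :: real
    using that by (auto elim!: nonpos_Ints_cases)
  have ed: "e + d > 0" using e d by simp
  have Gamma_e: "Gamma (e + real q) = pochhammer e q * Gamma e"
    using pochhammer_Gamma[OF not_nonpos_Int[OF e], of q] Gamma_real_pos[OF e] by (simp add: field_simps)
  have Gamma_ed: "Gamma (e + d + real q) = pochhammer (e + d) q * Gamma (e + d)"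
    using pochhammer_Gamma[OF not_nonpos_Int[OF ed], of q] Gamma_real_pos[OF ed] by (simp add: field_simps)
  have "pochhammer (e + d) q > 0" using ed by (intro pochhammer_pos)
  moreover have "Beta (e + real q) d = Gamma (e + real q) * Gamma d / Gamma (e + d + real q)"
    by (simp add: Beta_def add_ac)
  ultimately show ?thesis unfolding Gamma_e Gamma_ed Beta_def by (simp add: field_simps)
qed

lemma gamma_mu_pos: "\<mu> > -1/2 \<Longrightarrow> gamma_mu \<mu> n > 0"
  unfolding gamma_mu_def by (intro mult_pos_pos pochhammer_pos) auto

lemma gamma_mu_Suc:
  "gamma_mu \<mu> (Suc n) = gamma_mu \<mu> n * (if even n then 2 * (\<mu> + 1/2 + real (n div 2)) else 2 * (real (n div 2) + 1))"
proof (cases "even n")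
  case True
  then obtain p where n: "n = 2 * p" by auto
  have "Suc (2 * p) div 2 = p" "Suc (2 * p) mod 2 = 1" by presburger+
  then show ?thesis unfolding gamma_mu_def n by (simp add: pochhammer_Suc algebra_simps)
next
  case False
  then obtain p where n: "n = 2 * p + 1" using oddE by blast
  have "Suc (2 * p + 1) div 2 = Suc p" "Suc (2 * p + 1) mod 2 = 0" "(2 * p + 1) div 2 = p" "(2 * p + 1) mod 2 = 1"
    by presburger+
  then show ?thesis unfolding gamma_mu_def n by (simp add: pochhammer_Suc algebra_simps)
qed

lemma summable_power_divide_gamma_mu:
  fixes y :: real
  assumes \<mu>: "\<mu> > -1/2"
  shows "summable (\<lambda>n. y ^ n / gamma_mu \<mu> n)"
proof (rule summable_ratio_test[where c = "1/2" and N = "2 * (nat \<lceil>\<bar>y\<bar>\<rceil> + 1)"])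
  fix n :: nat
  assume "n \<ge> 2 * (nat \<lceil>\<bar>y\<bar>\<rceil> + 1)"
  then have "n div 2 \<ge> nat \<lceil>\<bar>y\<bar>\<rceil> + 1" by (simp add: less_eq_div_iff_mult_less_eq)
  then have "real (n div 2) \<ge> \<bar>y\<bar> + 1" by linarith
  define F where "F = (if even n then 2 * (\<mu> + 1/2 + real (n div 2)) else 2 * (real (n div 2) + 1))"
  have F: "F \<ge> 2 * \<bar>y\<bar>" "F > 0" using \<open>real (n div 2) \<ge> \<bar>y\<bar> + 1\<close> \<mu> by (auto simp: F_def)
  have g: "gamma_mu \<mu> n > 0" using gamma_mu_pos[OF \<mu>] .
  have "norm (y ^ Suc n / gamma_mu \<mu> (Suc n)) = \<bar>y\<bar> / F * (\<bar>y\<bar> ^ n / gamma_mu \<mu> n)"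
    using g F by (simp add: gamma_mu_Suc F_def[symmetric] abs_mult power_abs field_simps)
  also have "\<dots> \<le> 1/2 * (\<bar>y\<bar> ^ n / gamma_mu \<mu> n)"
    using F g by (intro mult_right_mono) (auto simp: field_simps)
  also have "\<bar>y\<bar> ^ n / gamma_mu \<mu> n = norm (y ^ n / gamma_mu \<mu> n)"
    using g by (simp add: power_abs)
  finally show "norm (y ^ Suc n / gamma_mu \<mu> (Suc n)) \<le> 1/2 * norm (y ^ n / gamma_mu \<mu> n)" .
qed simp

lemma has_integral_powr_one_minus_square:
  fixes s d :: real
  assumes s: "s > -1" and d: "d > 0"
  shows "((\<lambda>t. t powr s * (1 - t^2) powr (d - 1)) has_integral Beta ((s + 1) / 2) d / 2) {0..1}"
proof -
  define c where "c = (s + 1) / 2"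
  have c: "c > 0" using s by (simp add: c_def)
  have square_substitution:
    "ennreal ((x^2) powr (c - 1) * (1 - x^2) powr (d - 1) * (2 * x) * indicator {0..1} x) =
     ennreal (x powr s * (1 - x^2) powr (d - 1) * indicator {0..1} x * 2)" for x :: real
  proof (cases "x > 0")
    case True
    have "(x^2) powr (c - 1) * x = (x powr 2) powr (c - 1) * x powr 1"
      using True by (simp add: powr_realpow)
    also have "\<dots> = x powr (2 * (c - 1) + 1)" by (simp only: powr_powr powr_add)
    also have "2 * (c - 1) + 1 = s" by (simp add: c_def field_simps)
    finally show ?thesis by (metis (no_types, lifting) mult.assoc mult.commute)
  next
    case False
    then show ?thesis by (cases "x = 0") (auto simp: indicator_def)
  qed
  have "(\<integral>\<^sup>+u. ennreal (u powr (c - 1) * (1 - u) powr (d - 1)) * indicator {0..1} u \<partial>lborel) = ennreal (Beta c d)"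
    using nn_integral_has_integral_lebesgue'[OF _ has_integral_Beta_real[OF c d]] by simp
  also have "(\<integral>\<^sup>+u. ennreal (u powr (c - 1) * (1 - u) powr (d - 1)) * indicator {0..1} u \<partial>lborel)
     = (\<integral>\<^sup>+u. ennreal (u powr (c - 1) * (1 - u) powr (d - 1) * indicator {(0::real)^2..1^2} u) \<partial>lborel)"
    by (intro nn_integral_cong) (auto simp: indicator_def)
  also have "\<dots> = (\<integral>\<^sup>+x. ennreal ((x^2) powr (c - 1) * (1 - x^2) powr (d - 1) * (2 * x) * indicator {0..1} x) \<partial>lborel)"
    by (subst nn_integral_substitution[where g = "\<lambda>x. x ^ 2" and g' = "\<lambda>x. 2 * x"])
       (auto intro!: derivative_eq_intros continuous_intros simp: set_borel_measurable_def)
  finally have "(\<integral>\<^sup>+x. ennreal (x powr s * (1 - x^2) powr (d - 1) * indicator {0..1} x * 2) \<partial>lborel) = ennreal (Beta c d)"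
    by (simp only: square_substitution)
  then have "((\<lambda>x. x powr s * (1 - x^2) powr (d - 1) * indicator {0..1} x * 2) has_integral Beta c d) UNIV"
    by (rule nn_integral_has_integral[rotated 2]) (use Beta_pos[OF c d] in \<open>auto simp: indicator_def\<close>)
  then have "((\<lambda>x. if x \<in> {0..1} then x powr s * (1 - x^2) powr (d - 1) else 0) has_integral Beta c d / 2) UNIV"
    by (rule has_integral_divide[THEN has_integral_cong[THEN iffD1, rotated]]) (auto simp: indicator_def)
  then show ?thesis using has_integral_restrict_UNIV c_def by blast
qed

lemma power_mult_weight_nonneg:
  fixes a b t :: real
  assumes "0 \<le> t" "t \<le> 1"
  shows "t ^ n * weight a b t =
         t powr (real n + 2 * a) * (1 - t^2) powr (b - a - 1) + t powr (real n + 1 + 2 * a) * (1 - t^2) powr (b - a - 1)"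
proof (cases "t = 0")
  case True
  then show ?thesis by (cases n) (auto simp: weight_def)
next
  case False
  with assms have t: "t > 0" by auto
  have "(1 + t) powr (b - a) = (1 + t) powr (b - a - 1) * (1 + t)"
    using t powr_add[of "1 + t" "b - a - 1" 1] by simp
  moreover have "(1 - t^2) powr (b - a - 1) = (1 - t) powr (b - a - 1) * (1 + t) powr (b - a - 1)"
    by (simp add: powr_mult [symmetric] power2_eq_square algebra_simps)
  ultimately have "t ^ n * weight a b t = (t ^ n * t powr (2 * a)) * (1 - t^2) powr (b - a - 1) * (1 + t)"
    using t by (simp add: weight_def mult_ac)
  also have "t ^ n * t powr (2 * a) = t powr (real n + 2 * a)"
    using t by (simp add: powr_add powr_realpow)
  also have "t powr (real n + 2 * a) * (1 - t^2) powr (b - a - 1) * (1 + t) =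
      t powr (real n + 2 * a) * (1 - t^2) powr (b - a - 1) + (t powr (real n + 2 * a) * t) * (1 - t^2) powr (b - a - 1)"
    by (simp add: algebra_simps)
  also have "t powr (real n + 2 * a) * t = t powr (real n + 1 + 2 * a)"
    using t by (simp add: powr_add)
  finally show ?thesis .
qed

lemma power_mult_weight_reflect:
  fixes a b t :: real
  assumes "0 \<le> t" "t \<le> 1"
  shows "(-t) ^ n * weight a b (-t) =
         (-1) ^ n * (t powr (real n + 2 * a) * (1 - t^2) powr (b - a - 1) - t powr (real n + 1 + 2 * a) * (1 - t^2) powr (b - a - 1))"
proof (cases "t = 0")
  case True
  then show ?thesis by (cases n) (auto simp: weight_def)
next
  case False
  with assms have t: "t > 0" by auto
  have "(1 - t) powr (b - a) = (1 - t) powr (b - a - 1) * (1 - t)"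
    using assms powr_add[of "1 - t" "b - a - 1" 1] by simp
  moreover have "(1 - t^2) powr (b - a - 1) = (1 - t) powr (b - a - 1) * (1 + t) powr (b - a - 1)"
    by (simp add: powr_mult [symmetric] power2_eq_square algebra_simps)
  ultimately have "(-t) ^ n * weight a b (-t) = (-1) ^ n * ((t ^ n * t powr (2 * a)) * (1 - t^2) powr (b - a - 1) * (1 - t))"
    using t power_minus[of t n] by (simp add: weight_def mult_ac)
  also have "t ^ n * t powr (2 * a) = t powr (real n + 2 * a)"
    using t by (simp add: powr_add powr_realpow)
  also have "t powr (real n + 2 * a) * (1 - t^2) powr (b - a - 1) * (1 - t) =
      t powr (real n + 2 * a) * (1 - t^2) powr (b - a - 1) - (t powr (real n + 2 * a) * t) * (1 - t^2) powr (b - a - 1)"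
    by (simp add: algebra_simps)
  also have "t powr (real n + 2 * a) * t = t powr (real n + 1 + 2 * a)"
    using t by (simp add: powr_add)
  finally show ?thesis .
qed

lemma has_integral_power_mult_weight:
  fixes a b :: real
  assumes a: "a > -1/2" and ab: "a < b"
  shows "((\<lambda>t. t ^ n * weight a b t) has_integral Beta (a + 1/2 + real (n div 2 + n mod 2)) (b - a)) {-1..1}"
proof -
  define G where "G = (\<lambda>s t. t powr s * (1 - t^2) powr (b - a - 1) :: real)"
  define J where "J = (\<lambda>s. Beta ((s + 1) / 2) (b - a) / 2)"
  define s\<^sub>0 where "s\<^sub>0 = real n + 2 * a"
  define s\<^sub>1 where "s\<^sub>1 = real n + 1 + 2 * a"
  have "s\<^sub>0 > -1" "s\<^sub>1 > -1" using a by (auto simp: s\<^sub>0_def s\<^sub>1_def)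
  moreover have "(G s has_integral J s) {0..1}" if "s > -1" for s
    unfolding G_def J_def using has_integral_powr_one_minus_square[OF that] ab by simp
  ultimately have G\<^sub>0: "(G s\<^sub>0 has_integral J s\<^sub>0) {0..1}" and G\<^sub>1: "(G s\<^sub>1 has_integral J s\<^sub>1) {0..1}"
    by auto
  have right: "((\<lambda>t. t ^ n * weight a b t) has_integral (J s\<^sub>0 + J s\<^sub>1)) {0..1}"
    using has_integral_add[OF G\<^sub>0 G\<^sub>1]
    by (rule has_integral_eq[rotated]) (simp add: G_def s\<^sub>0_def s\<^sub>1_def power_mult_weight_nonneg)
  have "((\<lambda>t. (-t) ^ n * weight a b (-t)) has_integral ((-1) ^ n * (J s\<^sub>0 - J s\<^sub>1))) {0..1}"
    using has_integral_mult_right[OF has_integral_diff[OF G\<^sub>0 G\<^sub>1], of "(-1) ^ n"]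
    by (rule has_integral_eq[rotated]) (simp add: G_def s\<^sub>0_def s\<^sub>1_def power_mult_weight_reflect)
  then have "((\<lambda>t. (-(-t)) ^ n * weight a b (-(-t))) has_integral ((-1) ^ n * (J s\<^sub>0 - J s\<^sub>1))) {-1..-0}"
    by (rule has_integral_reflect_real[THEN iffD2])
  then have left: "((\<lambda>t. t ^ n * weight a b t) has_integral ((-1) ^ n * (J s\<^sub>0 - J s\<^sub>1))) {-1..0}"
    by simp
  have "((\<lambda>t. t ^ n * weight a b t) has_integral ((-1) ^ n * (J s\<^sub>0 - J s\<^sub>1) + (J s\<^sub>0 + J s\<^sub>1))) {-1..1}"
    by (rule has_integral_combine[OF _ _ left right]) auto
  moreover have "(-1) ^ n * (J s\<^sub>0 - J s\<^sub>1) + (J s\<^sub>0 + J s\<^sub>1) = Beta (a + 1/2 + real (n div 2 + n mod 2)) (b - a)"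
  proof (cases "even n")
    case True
    then obtain p where n: "n = 2 * p" by auto
    have "(-1) ^ n * (J s\<^sub>0 - J s\<^sub>1) + (J s\<^sub>0 + J s\<^sub>1) = Beta ((s\<^sub>0 + 1) / 2) (b - a)"
      using True by (simp add: J_def)
    also have "(s\<^sub>0 + 1) / 2 = a + 1/2 + real (n div 2 + n mod 2)"
      by (simp add: s\<^sub>0_def n field_simps)
    finally show ?thesis .
  next
    case False
    then obtain p where n: "n = 2 * p + 1" using oddE by blast
    have half: "n div 2 + n mod 2 = p + 1" using n by presburger
    have "(-1) ^ n * (J s\<^sub>0 - J s\<^sub>1) + (J s\<^sub>0 + J s\<^sub>1) = Beta ((s\<^sub>1 + 1) / 2) (b - a)"
      using False by (simp add: J_def)
    also have "(s\<^sub>1 + 1) / 2 = a + 1/2 + real (n div 2 + n mod 2)"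
      unfolding half by (simp add: s\<^sub>1_def n field_simps)
    finally show ?thesis .
  qed
  ultimately show ?thesis by simp
qed

lemma has_integral_power_mult_weight_gamma_mu:
  fixes a b :: real
  assumes a: "a > -1/2" and ab: "a < b"
  shows "((\<lambda>t. t ^ n * weight a b t) has_integral Beta (a + 1/2) (b - a) * (gamma_mu a n / gamma_mu b n)) {-1..1}"
proof -
  define q where "q = n div 2 + n mod 2"
  have "pochhammer (b + 1/2) q > 0" using a ab by (intro pochhammer_pos) simp
  have "Beta (a + 1/2 + real q) (b - a) =
      Beta (a + 1/2) (b - a) * (pochhammer (a + 1/2) q / pochhammer (a + 1/2 + (b - a)) q)"
    using a ab by (intro Beta_plus_of_nat) auto
  also have "a + 1/2 + (b - a) = b + 1/2" by simp
  also have "pochhammer (a + 1/2) q / pochhammer (b + 1/2) q = gamma_mu a n / gamma_mu b n"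
    using \<open>pochhammer (b + 1/2) q > 0\<close> by (simp add: gamma_mu_def q_def field_simps)
  finally show ?thesis
    using has_integral_power_mult_weight[OF a ab, of n] by (simp add: q_def)
qed

lemma summable_power_series_shrink:
  fixes c :: "nat \<Rightarrow> real" and x t :: real
  assumes abs_summable: "summable (\<lambda>n. norm (c n) * \<bar>x\<bar> ^ n)" and t: "t \<in> {-1..1}"
  shows "summable (\<lambda>n. c n * (x * t) ^ n)"
    and "norm (\<Sum>n<k. c n * (x * t) ^ n) \<le> (\<Sum>n. norm (c n) * \<bar>x\<bar> ^ n)"
proof -
  have term_bound: "norm (c n * (x * t) ^ n) \<le> norm (c n) * \<bar>x\<bar> ^ n" for n
  proof -
    have "\<bar>x * t\<bar> \<le> \<bar>x\<bar>" using t by (auto simp: abs_mult intro: mult_left_le)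
    then have "\<bar>x * t\<bar> ^ n \<le> \<bar>x\<bar> ^ n" by (intro power_mono) auto
    then show ?thesis by (simp add: abs_mult power_abs mult_left_mono)
  qed
  show "summable (\<lambda>n. c n * (x * t) ^ n)"
    by (rule summable_comparison_test'[OF abs_summable term_bound])
  have "norm (\<Sum>n<k. c n * (x * t) ^ n) \<le> (\<Sum>n<k. norm (c n) * \<bar>x\<bar> ^ n)"
    by (rule order_trans[OF norm_sum sum_mono[OF term_bound]])
  also have "\<dots> \<le> (\<Sum>n. norm (c n) * \<bar>x\<bar> ^ n)"
    by (rule sum_le_suminf[OF abs_summable]) auto
  finally show "norm (\<Sum>n<k. c n * (x * t) ^ n) \<le> (\<Sum>n. norm (c n) * \<bar>x\<bar> ^ n)" .
qed

lemma has_integral_power_series_mult: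
  fixes w :: "real \<Rightarrow> real" and c m :: "nat \<Rightarrow> real" and x :: real
  assumes w_nonneg: "\<And>t. t \<in> {-1..1} \<Longrightarrow> w t \<ge> 0"
    and moments: "\<And>n. ((\<lambda>t. t ^ n * w t) has_integral m n) {-1..1}"
    and abs_summable: "summable (\<lambda>n. norm (c n) * \<bar>x\<bar> ^ n)"
  shows "summable (\<lambda>n. c n * m n * x ^ n)"
    and "((\<lambda>t. (\<Sum>n. c n * (x * t) ^ n) * w t) has_integral (\<Sum>n. c n * m n * x ^ n)) {-1..1}"
proof -
  define K where "K = (\<Sum>n. norm (c n) * \<bar>x\<bar> ^ n)"
  define f where "f = (\<lambda>k t. (\<Sum>n<k. c n * (x * t) ^ n) * w t)"
  define g where "g = (\<lambda>t. (\<Sum>n. c n * (x * t) ^ n) * w t)"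
  have partial: "(f k has_integral (\<Sum>n<k. c n * m n * x ^ n)) {-1..1}" for k
  proof -
    have "((\<lambda>t. \<Sum>n<k. (c n * x ^ n) * (t ^ n * w t)) has_integral (\<Sum>n<k. (c n * x ^ n) * m n)) {-1..1}"
      by (intro has_integral_sum has_integral_mult_right moments) auto
    then have "((\<lambda>t. \<Sum>n<k. (c n * x ^ n) * (t ^ n * w t)) has_integral (\<Sum>n<k. c n * m n * x ^ n)) {-1..1}"
      by (simp add: mult_ac)
    then show ?thesis unfolding f_def
      by (rule has_integral_eq[rotated]) (simp add: sum_distrib_left sum_distrib_right power_mult_distrib mult_ac)
  qed
  have dominating: "((\<lambda>t. K * w t) has_integral K * m 0) {-1..1}"
    using has_integral_mult_right[OF moments[of 0], of K] by simp
  have bound: "norm (f k t) \<le> K * w t" if t: "t \<in> {-1..1}" for t k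
    using summable_power_series_shrink(2)[OF abs_summable t, of k] w_nonneg[OF t]
    unfolding f_def K_def by (simp add: abs_mult mult_right_mono)
  have "(\<lambda>k. f k t) \<longlonglongrightarrow> g t" if "t \<in> {-1..1}" for t
    unfolding f_def g_def
    by (intro tendsto_mult_right summable_LIMSEQ summable_power_series_shrink(1)[OF abs_summable that])
  note convergence = dominated_convergence[OF has_integral_integrable[OF partial]
      has_integral_integrable[OF dominating] bound this]
  have "g integrable_on {-1..1}" using convergence(1) by (simp add: g_def)
  have "integral {-1..1} (f k) = (\<Sum>n<k. c n * m n * x ^ n)" for k
    using partial by (rule integral_unique)
  then have "(\<lambda>n. c n * m n * x ^ n) sums integral {-1..1} g"
    using convergence(2) by (simp add: sums_def)
  then show "summable (\<lambda>n. c n * m n * x ^ n)"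
    and "(g has_integral (\<Sum>n. c n * m n * x ^ n)) {-1..1}"
    using \<open>g integrable_on {-1..1}\<close> by (auto simp: sums_iff)
qed

lemma has_integral_power_series_mult_weight:
  fixes a b x :: real and c :: "nat \<Rightarrow> real"
  assumes a: "a > -1/2" and ab: "a < b"
    and abs_summable: "summable (\<lambda>n. norm (c n) * \<bar>x\<bar> ^ n)"
  shows "summable (\<lambda>n. c n * (gamma_mu a n / gamma_mu b n) * x ^ n)"
    and "((\<lambda>t. (\<Sum>n. c n * (x * t) ^ n) * weight a b t) has_integral
          Beta (a + 1/2) (b - a) * (\<Sum>n. c n * (gamma_mu a n / gamma_mu b n) * x ^ n)) {-1..1}"
proof -
  define B where "B = Beta (a + 1/2) (b - a)"
  have "B > 0" using a ab by (simp add: B_def Beta_pos)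
  have weight_nonneg: "weight a b t \<ge> 0" for t
    unfolding weight_def by simp
  note transform = has_integral_power_series_mult[OF weight_nonneg
      has_integral_power_mult_weight_gamma_mu[OF a ab, folded B_def] abs_summable]
  have rearrange: "c n * (B * (gamma_mu a n / gamma_mu b n)) * x ^ n = B * (c n * (gamma_mu a n / gamma_mu b n) * x ^ n)" for n
    by (simp add: mult_ac)
  show summable: "summable (\<lambda>n. c n * (gamma_mu a n / gamma_mu b n) * x ^ n)"
    using transform(1) \<open>B > 0\<close> unfolding rearrange summable_cmult_iff by simp
  show "((\<lambda>t. (\<Sum>n. c n * (x * t) ^ n) * weight a b t) has_integral
          B * (\<Sum>n. c n * (gamma_mu a n / gamma_mu b n) * x ^ n)) {-1..1}"
    using transform(2) by (simp only: rearrange suminf_mult[OF summable])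
qed

lemma has_integral_exp_mu_weight:
  fixes a b x :: real
  assumes a: "a > -1/2" and ab: "a < b"
  shows "((\<lambda>t. exp_mu a (x * t) * weight a b t) has_integral Beta (a + 1/2) (b - a) * exp_mu b x) {-1..1}"
proof -
  have \<gamma>_pos: "gamma_mu a n > 0" for n using gamma_mu_pos a by simp
  have "summable (\<lambda>n. norm (1 / gamma_mu a n) * \<bar>x\<bar> ^ n)"
    using summable_power_divide_gamma_mu[OF a, of "\<bar>x\<bar>"] \<gamma>_pos by (simp add: abs_of_pos)
  note transform = has_integral_power_series_mult_weight[OF a ab this]
  have "exp_mu a y = (\<Sum>n. 1 / gamma_mu a n * y ^ n)" for y
    by (simp add: exp_mu_def)
  moreover have "exp_mu b x = (\<Sum>n. 1 / gamma_mu a n * (gamma_mu a n / gamma_mu b n) * x ^ n)"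
    using \<gamma>_pos by (simp add: exp_mu_def less_imp_neq[OF \<gamma>_pos, symmetric])
  ultimately show ?thesis
    using transform(2) by (simp only:)
qed

theorem mainTheorem4:
  fixes \<mu>1 \<mu>2 :: real
  assumes "-1/2 < \<mu>1" and "\<mu>1 < \<mu>2"
  shows "(\<forall>a :: nat \<Rightarrow> real.
            (\<forall>y\<in>{-1<..<1}. summable (\<lambda>n. a n * y ^ n)) \<longrightarrow>
            (\<forall>x\<in>{-1<..<1}.
               summable (\<lambda>n. a n * (gamma_mu \<mu>1 n / gamma_mu \<mu>2 n) * x ^ n) \<and>
               (\<lambda>t. (\<Sum>n. a n * (x * t) ^ n) * weight \<mu>1 \<mu>2 t) integrable_on {-1..1} \<and>
               (\<Sum>n. a n * (gamma_mu \<mu>1 n / gamma_mu \<mu>2 n) * x ^ n) =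
                 1 / Beta (\<mu>1 + 1/2) (\<mu>2 - \<mu>1) *
                 integral {-1..1} (\<lambda>t. (\<Sum>n. a n * (x * t) ^ n) * weight \<mu>1 \<mu>2 t)))
       \<and> (\<forall>x :: real.
            (\<lambda>t. exp_mu \<mu>1 (x * t) * weight \<mu>1 \<mu>2 t) integrable_on {-1..1} \<and>
            exp_mu \<mu>2 x =
              1 / Beta (\<mu>1 + 1/2) (\<mu>2 - \<mu>1) *
              integral {-1..1} (\<lambda>t. exp_mu \<mu>1 (x * t) * weight \<mu>1 \<mu>2 t))"
proof (intro conjI allI impI ballI)
  have "Beta (\<mu>1 + 1/2) (\<mu>2 - \<mu>1) > 0" using assms by (simp add: Beta_pos)
  fix a :: "nat \<Rightarrow> real" and x :: real
  assume converges: "\<forall>y\<in>{-1<..<1}. summable (\<lambda>n. a n * y ^ n)" and x: "x \<in> {-1<..<1}"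
  then have "(\<bar>x\<bar> + 1) / 2 \<in> {-1<..<1}" by auto
  with converges x have "summable (\<lambda>n. norm (a n * x ^ n))"
    by (intro powser_insidea[of a "(\<bar>x\<bar> + 1) / 2"]) auto
  then have "summable (\<lambda>n. norm (a n) * \<bar>x\<bar> ^ n)"
    by (simp add: abs_mult power_abs)
  from has_integral_power_series_mult_weight[OF assms this] \<open>Beta (\<mu>1 + 1/2) (\<mu>2 - \<mu>1) > 0\<close>
  show "summable (\<lambda>n. a n * (gamma_mu \<mu>1 n / gamma_mu \<mu>2 n) * x ^ n)"
    and "(\<lambda>t. (\<Sum>n. a n * (x * t) ^ n) * weight \<mu>1 \<mu>2 t) integrable_on {-1..1}"
    and "(\<Sum>n. a n * (gamma_mu \<mu>1 n / gamma_mu \<mu>2 n) * x ^ n) =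
           1 / Beta (\<mu>1 + 1/2) (\<mu>2 - \<mu>1) *
           integral {-1..1} (\<lambda>t. (\<Sum>n. a n * (x * t) ^ n) * weight \<mu>1 \<mu>2 t)"
    by (auto dest: integral_unique)
next
  fix x :: real
  have "Beta (\<mu>1 + 1/2) (\<mu>2 - \<mu>1) > 0" using assms by (simp add: Beta_pos)
  with has_integral_exp_mu_weight[OF assms, of x]
  show "(\<lambda>t. exp_mu \<mu>1 (x * t) * weight \<mu>1 \<mu>2 t) integrable_on {-1..1}"
    and "exp_mu \<mu>2 x = 1 / Beta (\<mu>1 + 1/2) (\<mu>2 - \<mu>1) *
           integral {-1..1} (\<lambda>t. exp_mu \<mu>1 (x * t) * weight \<mu>1 \<mu>2 t)"
    by (auto dest: integral_unique)
qed

end
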